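(* Let $H$ be a balanced graph, fix a sequence of edges defining $H_d$, and let $uv \in E(K_n)$. If $p = p(n)$ and $d = d(n)$ are chosen so that $p^{\lambda(H)} n \geqslant \omega\, v(H)\, d$ and $\omega^{(v(H)-2)d} \geqslant n$ for some function $\omega = \omega(n)$, and $pn \to \infty$, then $\mathbb{E}\big(X_d(uv)\big) \to \infty$ as $n \to \infty$.
   Context: $H$ is a graph with $v(H) \geqslant 4$; it is balanced if $e(H) \geqslant 2v(H)-2$ and $\frac{e(F)-1}{v(F)-2} \leqslant \lambda(H) := \frac{e(H)-2}{v(H)-2}$ for every proper subgraph $F \subsetneq H$ with $v(F) \geqslant 3$. The graph $H_d$: choose a sequence of edges $(e_1, e_2, \ldots)$ of $H$ such that $e_j$ and $e_{j+1}$ share no endpoint for every $j$. Take copies $H^{(1)}, \ldots, H^{(d)}$ of $H$ and, for each $1 \leqslant j \leqslant d-1$, identify the endpoints of the edge $e_{j+1}$ in $H^{(j)}$ with the endpoints of $e_{j+1}$ in $H^{(j+1)}$. Then remove the edge $e_1$ from $H^{(1)}$ and, for each $1 \leqslant j \leqslant d-1$, remove the (shared) edge $e_{j+1}$ of $H^{(j)} \cap H^{(j+1)}$. The root of $H_d$ is the pair of endpoints of $e_1$ in $H^{(1)}$ (a non-edge of $H_d$). $X_d(uv)$ is the number of copies of $H_d$ in $G_{n,p}$ (the Erdős–Rényi random graph on $[n]$) rooted at $uv$, i.e. whose root is mapped onto $\{u,v\}$. *)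

theory Defs
  imports "HOL-Probability.Probability"
begin

definition simple_graph :: "'a set \<Rightarrow> 'a set set \<Rightarrow> bool" where
  "simple_graph V E \<longleftrightarrow> finite V \<and> (\<forall>e\<in>E. e \<subseteq> V \<and> card e = 2)"

definition lambdaH :: "'a set \<Rightarrow> 'a set set \<Rightarrow> real" where
  "lambdaH V E = (real (card E) - 2) / (real (card V) - 2)"

definition balanced :: "'a set \<Rightarrow> 'a set set \<Rightarrow> bool" where
  "balanced V E \<longleftrightarrow> simple_graph V E \<and> card V \<ge> 4 \<and>
     real (card E) \<ge> 2 * real (card V) - 2 \<and>
     (\<forall>VF EF. VF \<subseteq> V \<and> EF \<subseteq> E \<and> (\<forall>e\<in>EF. e \<subseteq> VF) \<and> (VF, EF) \<noteq> (V, E)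
        \<and> card VF \<ge> 3 \<longrightarrow>
        (real (card EF) - 1) / (real (card VF) - 2) \<le> lambdaH V E)"

definition edge_seq :: "'a set set \<Rightarrow> (nat \<Rightarrow> 'a set) \<Rightarrow> bool" where
  "edge_seq E es \<longleftrightarrow> (\<forall>j\<ge>1. es j \<in> E \<and> es j \<inter> es (Suc j) = {})"

text \<open>H_d: copies H^(1..d) have vertices (x, j). Vertex (x, j) with j >= 2 and x an endpoint
  of e_j is identified with (x, j-1) (the endpoints of e_j in copies j-1 and j are glued).
  Since consecutive edges are disjoint, this representative map is canonical.\<close>

definition Hd_rep :: "(nat \<Rightarrow> 'a set) \<Rightarrow> 'a \<times> nat \<Rightarrow> 'a \<times> nat" where
  "Hd_rep es xj = (if 2 \<le> snd xj \<and> fst xj \<in> es (snd xj) then (fst xj, snd xj - 1) else xj)"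

definition Hd_V :: "'a set \<Rightarrow> (nat \<Rightarrow> 'a set) \<Rightarrow> nat \<Rightarrow> ('a \<times> nat) set" where
  "Hd_V V es d = Hd_rep es ` (V \<times> {1..d})"

text \<open>Edges: union of the images of all edges of all copies, minus e_1 of copy 1 and minus
  the shared edge e_{j+1} of copies j and j+1 (1 <= j <= d-1).\<close>

definition Hd_E :: "'a set set \<Rightarrow> (nat \<Rightarrow> 'a set) \<Rightarrow> nat \<Rightarrow> ('a \<times> nat) set set" where
  "Hd_E E es d =
     {Hd_rep es ` (e \<times> {j}) | e j. e \<in> E \<and> j \<in> {1..d}}
     - ({es 1 \<times> {1}} \<union> {es (Suc j) \<times> {j} | j. j \<in> {1..d - 1}})"

definition Hd_root :: "(nat \<Rightarrow> 'a set) \<Rightarrow> ('a \<times> nat) set" where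
  "Hd_root es = es 1 \<times> {1}"

definition Kn_edges :: "nat \<Rightarrow> nat set set" where
  "Kn_edges n = {e. e \<subseteq> {1..n} \<and> card e = 2}"

definition Gnp :: "nat \<Rightarrow> real \<Rightarrow> nat set set pmf" where
  "Gnp n p = map_pmf (\<lambda>f. {e \<in> Kn_edges n. f e}) (Pi_pmf (Kn_edges n) False (\<lambda>_. bernoulli_pmf p))"

definition rooted_copies ::
  "'b set \<Rightarrow> 'b set set \<Rightarrow> 'b set \<Rightarrow> nat \<Rightarrow> nat set set \<Rightarrow> nat \<Rightarrow> nat \<Rightarrow> (nat set \<times> nat set set) set" where
  "rooted_copies VH EH R n G u v =
     {(W, F). W \<subseteq> {1..n} \<and> F \<subseteq> G \<and>
        (\<exists>\<phi>. inj_on \<phi> VH \<and> \<phi> ` VH = W \<and> F = (\<lambda>e. \<phi> ` e) ` EH \<and> \<phi> ` R = {u, v})}"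

definition X_d :: "'a set \<Rightarrow> 'a set set \<Rightarrow> (nat \<Rightarrow> 'a set) \<Rightarrow> nat \<Rightarrow> nat \<Rightarrow> nat set set \<Rightarrow> nat \<Rightarrow> nat \<Rightarrow> nat" where
  "X_d V E es d n G u v = card (rooted_copies (Hd_V V es d) (Hd_E E es d) (Hd_root es) n G u v)"

end

theory Submission
  imports Defs
begin

(*
  Choosing the (v(H) - 2) d non-root vertices of H_d among the n - 2 vertices outside {u, v}
  gives at least C(n - 2, K), K = (v(H) - 2) d, rooted copies of H_d in K_n, and each of them
  survives in G(n, p) with probability p^e(H_d), where e(H_d) <= (e(H) - 2) d + 1.  Since
  p^((e(H) - 2) d) = (p^lambda(H))^K and C(m, K) >= (m / K)^K, the expectation is at least
  p ((n - 2) p^lambda(H) / K)^K >= p omega^K >= p n, which tends to infinity.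
*)

lemma finite_Kn_edges: "finite (Kn_edges n)"
  by (rule finite_subset[of _ "Pow {1..n}"]) (auto simp: Kn_edges_def)

lemma prob_Gnp_contains:
  assumes F: "F \<subseteq> Kn_edges n" and q: "0 \<le> q" "q \<le> 1"
  shows "measure_pmf.prob (Gnp n q) {G. F \<subseteq> G} = q ^ card F"
proof -
  let ?A = "Pi (Kn_edges n) (\<lambda>e. if e \<in> F then {True} else UNIV)"
  have preimage: "(\<lambda>f. {e \<in> Kn_edges n. f e}) -` {G. F \<subseteq> G} = ?A"
    using F by (auto simp: Pi_def)
  have "measure_pmf.prob (Gnp n q) {G. F \<subseteq> G}
      = measure_pmf.prob (Pi_pmf (Kn_edges n) False (\<lambda>_. bernoulli_pmf q)) ?A"
    unfolding Gnp_def measure_map_pmf preimage ..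
  also have "\<dots> = (\<Prod>e\<in>Kn_edges n. measure_pmf.prob (bernoulli_pmf q) (if e \<in> F then {True} else UNIV))"
    by (rule measure_Pi_pmf_Pi) (rule finite_Kn_edges)
  also have "\<dots> = (\<Prod>e\<in>Kn_edges n. if e \<in> F then q else 1)"
    by (intro prod.cong) (auto simp: measure_pmf_single q)
  also have "\<dots> = q ^ card F"
    using F finite_Kn_edges[of n] by (simp add: prod.If_cases Int_absorb1)
  finally show ?thesis .
qed

lemma expectation_Gnp_card_contained:
  fixes F :: "'c \<Rightarrow> nat set set"
  assumes C: "finite C"
    and F: "\<And>c. c \<in> C \<Longrightarrow> F c \<subseteq> Kn_edges n" "\<And>c. c \<in> C \<Longrightarrow> card (F c) = m"
    and q: "0 \<le> q" "q \<le> 1"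
  shows "measure_pmf.expectation (Gnp n q) (\<lambda>G. real (card {c \<in> C. F c \<subseteq> G})) = real (card C) * q ^ m"
proof -
  have card_eq_sum: "real (card {c \<in> C. F c \<subseteq> G}) = (\<Sum>c\<in>C. indicator {G. F c \<subseteq> G} G)" for G
    using sum.inter_filter[OF C, of "\<lambda>_. 1::real" "\<lambda>c. F c \<subseteq> G"] by (simp add: indicator_def of_bool_def)
  have "measure_pmf.expectation (Gnp n q) (\<lambda>G. real (card {c \<in> C. F c \<subseteq> G}))
      = (\<Sum>c\<in>C. measure_pmf.prob (Gnp n q) {G. F c \<subseteq> G})"
    unfolding card_eq_sum
    by (subst Bochner_Integration.integral_sum) (auto intro!: integrable_real_indicator simp: less_top[symmetric] measure_pmf.emeasure_finite)
  also have "\<dots> = (\<Sum>c\<in>C. q ^ m)"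
    by (intro sum.cong) (auto simp: prob_Gnp_contains F q)
  finally show ?thesis by simp
qed

lemma rooted_copies_eq:
  "rooted_copies VH EH R n G u v = {c \<in> rooted_copies VH EH R n UNIV u v. snd c \<subseteq> G}"
  unfolding rooted_copies_def by auto

lemma ex_inj_on_image_eq:
  assumes "finite VH" "R \<subseteq> VH" "finite S" "finite T" "S \<inter> T = {}"
    and "card R = card T" "card (VH - R) = card S"
  shows "\<exists>\<phi>. inj_on \<phi> VH \<and> \<phi> ` VH = S \<union> T \<and> \<phi> ` R = T"
proof -
  obtain r where r: "bij_betw r R T"
    using finite_same_card_bij[OF finite_subset[OF assms(2,1)] assms(4,6)] by blast
  obtain h where h: "bij_betw h (VH - R) S"
    using finite_same_card_bij[OF _ assms(3,7)] assms(1) by blast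
  define \<phi> where "\<phi> x = (if x \<in> R then r x else h x)" for x
  have "bij_betw \<phi> R T" using r by (rule bij_betw_cong[THEN iffD1, rotated]) (simp add: \<phi>_def)
  moreover have "bij_betw \<phi> (VH - R) S" using h by (rule bij_betw_cong[THEN iffD1, rotated]) (simp add: \<phi>_def)
  ultimately have "bij_betw \<phi> (R \<union> (VH - R)) (T \<union> S)"
    using assms(5) by (intro bij_betw_combine) auto
  moreover have "R \<union> (VH - R) = VH" using assms(2) by blast
  ultimately have "inj_on \<phi> VH" "\<phi> ` VH = S \<union> T"
    by (auto simp: bij_betw_def)
  with \<open>bij_betw \<phi> R T\<close> show ?thesis by (auto simp: bij_betw_def)
qed

context
  fixes VH :: "'b set" and EH :: "'b set set" and R :: "'b set" and n u v :: nat
  assumes edges: "\<And>e. e \<in> EH \<Longrightarrow> e \<subseteq> VH" "\<And>e. e \<in> EH \<Longrightarrow> card e = 2"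
begin

lemma rooted_copy_in_Kn:
  assumes "c \<in> rooted_copies VH EH R n UNIV u v"
  shows "snd c \<subseteq> Kn_edges n" "card (snd c) = card EH"
proof -
  obtain \<phi> where \<phi>: "fst c \<subseteq> {1..n}" "inj_on \<phi> VH" "\<phi> ` VH = fst c" "snd c = image \<phi> ` EH"
    using assms unfolding rooted_copies_def by auto
  have "card (\<phi> ` e) = 2" if "e \<in> EH" for e
    using edges[OF that] \<phi>(2) by (metis card_image inj_on_subset)
  then show "snd c \<subseteq> Kn_edges n"
    using \<phi> edges by (fastforce simp: Kn_edges_def)
  have "inj_on (image \<phi>) EH"
    using inj_on_image_Pow[OF \<phi>(2)] edges by (meson PowI inj_on_subset subsetI)
  then show "card (snd c) = card EH" using \<phi>(4) by (simp add: card_image)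
qed

lemma finite_rooted_copies: "finite (rooted_copies VH EH R n G u v)"
proof -
  have "rooted_copies VH EH R n G u v \<subseteq> Pow {1..n} \<times> Pow (Pow {1..n})"
    unfolding rooted_copies_def by (force dest: edges)
  then show ?thesis by (rule finite_subset) auto
qed

lemma card_rooted_copies_ge:
  assumes VH: "finite VH" "R \<subseteq> VH" "card R = 2" and uv: "u \<in> {1..n}" "v \<in> {1..n}" "u \<noteq> v"
  shows "(n - 2) choose (card VH - 2) \<le> card (rooted_copies VH EH R n UNIV u v)"
proof -
  let ?S = "{S. S \<subseteq> {1..n} - {u, v} \<and> card S = card VH - 2}"
  have "card ({1..n} - {u, v}) = n - 2" using uv by (simp add: card_Diff_subset)
  then have card_S: "card ?S = (n - 2) choose (card VH - 2)" by (simp add: n_subsets)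
  have "?S \<subseteq> (\<lambda>c. fst c - {u, v}) ` rooted_copies VH EH R n UNIV u v"
  proof
    fix S assume "S \<in> ?S"
    then have S: "S \<subseteq> {1..n}" "S \<inter> {u, v} = {}" "card S = card VH - 2" by auto
    have "card (VH - R) = card S" using VH S(3) by (simp add: card_Diff_subset finite_subset)
    moreover have "card R = card {u, v}" using VH(3) uv(3) by simp
    ultimately obtain \<phi> where \<phi>: "inj_on \<phi> VH" "\<phi> ` VH = S \<union> {u, v}" "\<phi> ` R = {u, v}"
      using ex_inj_on_image_eq[OF VH(1,2) finite_subset[OF S(1)] _ S(2)] by blast
    have "(S \<union> {u, v}, image \<phi> ` EH) \<in> rooted_copies VH EH R n UNIV u v"
      unfolding rooted_copies_def mem_Collect_eq case_prod_conv using \<phi> S(1) uv(1,2) by blast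
    moreover have "S = fst (S \<union> {u, v}, image \<phi> ` EH) - {u, v}" using S(2) by auto
    ultimately show "S \<in> (\<lambda>c. fst c - {u, v}) ` rooted_copies VH EH R n UNIV u v" by (rule rev_image_eqI)
  qed
  then show ?thesis unfolding card_S[symmetric] by (rule surj_card_le[OF finite_rooted_copies])
qed

end

locale Hd_construction =
  fixes V :: "'a set" and E :: "'a set set" and es :: "nat \<Rightarrow> 'a set" and d :: nat
  assumes simple: "simple_graph V E" and admissible: "edge_seq E es" and d_pos: "d \<ge> 1"
begin

lemma finite_V: "finite V"
  using simple by (simp add: simple_graph_def)

lemma finite_E: "finite E"
  using simple finite_V by (auto simp: simple_graph_def intro: finite_subset[of E "Pow V"])

lemma es_in_E: "j \<ge> 1 \<Longrightarrow> es j \<in> E"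
  using admissible by (simp add: edge_seq_def)

lemma es_subset_V: "j \<ge> 1 \<Longrightarrow> es j \<subseteq> V"
  using es_in_E simple by (auto simp: simple_graph_def)

lemma finite_es: "j \<ge> 1 \<Longrightarrow> finite (es j)"
  using es_subset_V finite_V by (rule finite_subset)

lemma card_es: "j \<ge> 1 \<Longrightarrow> card (es j) = 2"
  using es_in_E simple by (auto simp: simple_graph_def)

lemma es_disjoint_Suc: "j \<ge> 1 \<Longrightarrow> es j \<inter> es (Suc j) = {}"
  using admissible by (simp add: edge_seq_def)

lemma es_neq_Suc: "j \<ge> 1 \<Longrightarrow> es j \<noteq> es (Suc j)"
  using es_disjoint_Suc card_es by fastforce

lemma card_E_ge_2: "card E \<ge> 2"
proof -
  have "card {es 1, es 2} = 2" using es_neq_Suc[of 1] by (simp add: numeral_2_eq_2)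
  moreover have "{es 1, es 2} \<subseteq> E" using es_in_E[of 1] es_in_E[of 2] by simp
  ultimately show ?thesis using card_mono[OF finite_E] by metis
qed

(* the vertices of copies j \<ge> 2 that Hd_rep identifies with vertices of copy j - 1 *)
definition glued :: "('a \<times> nat) set" where
  "glued = (\<Union>j\<in>{2..d}. es j \<times> {j})"

lemma Hd_V_eq: "Hd_V V es d = V \<times> {1..d} - glued"
proof
  show "Hd_V V es d \<subseteq> V \<times> {1..d} - glued"
  proof
    fix y assume "y \<in> Hd_V V es d"
    then obtain x j where xj: "x \<in> V" "j \<in> {1..d}" "y = Hd_rep es (x, j)"
      by (auto simp: Hd_V_def)
    show "y \<in> V \<times> {1..d} - glued"
    proof (cases "2 \<le> j \<and> x \<in> es j")
      case True
      have "x \<notin> es (j - 1)" if "j - 1 \<ge> 2"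
        using es_disjoint_Suc[of "j - 1"] True that by (auto simp: disjoint_iff)
      then show ?thesis using xj True by (auto simp: glued_def Hd_rep_def)
    next
      case False
      then show ?thesis using xj by (auto simp: glued_def Hd_rep_def)
    qed
  qed
next
  show "V \<times> {1..d} - glued \<subseteq> Hd_V V es d"
  proof
    fix y assume y: "y \<in> V \<times> {1..d} - glued"
    then have "Hd_rep es y = y" by (auto simp: glued_def Hd_rep_def)
    then show "y \<in> Hd_V V es d" using y unfolding Hd_V_def by force
  qed
qed

lemma card_glued: "card glued = 2 * (d - 1)"
proof -
  have "card glued = (\<Sum>j\<in>{2..d}. card (es j \<times> {j}))"
    unfolding glued_def by (intro card_UN_disjoint) (auto simp: finite_es)
  also have "\<dots> = (\<Sum>j\<in>{2..d}. 2)" by (intro sum.cong) (auto simp: card_cartesian_product card_es)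
  finally show ?thesis by simp
qed

lemma card_Hd_V: "card (Hd_V V es d) = (card V - 2) * d + 2"
proof -
  have "es j \<times> {j} \<subseteq> V \<times> {1..d}" if "j \<in> {2..d}" for j
    using es_subset_V[of j] that by auto
  then have "glued \<subseteq> V \<times> {1..d}" unfolding glued_def by blast
  then have card_eq: "card (Hd_V V es d) = card V * d - 2 * (d - 1)"
    using finite_V by (simp add: Hd_V_eq card_Diff_subset finite_subset card_glued card_cartesian_product)
  have "card V \<ge> 2" using card_mono[OF finite_V es_subset_V[of 1]] card_es[of 1] by simp
  then obtain c where "card V = 2 + c" using le_Suc_ex by blast
  with card_eq d_pos show ?thesis by (simp add: algebra_simps diff_mult_distrib2)
qed

lemma finite_Hd_V: "finite (Hd_V V es d)"
  using finite_V by (simp add: Hd_V_def)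

lemma Hd_root_subset: "Hd_root es \<subseteq> Hd_V V es d"
  using d_pos es_subset_V[of 1] by (force simp: Hd_V_eq Hd_root_def glued_def)

lemma card_Hd_root: "card (Hd_root es) = 2"
  using card_es[of 1] by (simp add: Hd_root_def card_cartesian_product)

lemma Hd_E_edge:
  assumes "f \<in> Hd_E E es d"
  shows "f \<subseteq> Hd_V V es d" "card f = 2"
proof -
  obtain e j where ej: "e \<in> E" "j \<in> {1..d}" "f = Hd_rep es ` (e \<times> {j})"
    using assms by (auto simp: Hd_E_def)
  have "e \<subseteq> V" "card e = 2" using simple ej(1) by (auto simp: simple_graph_def)
  then show "f \<subseteq> Hd_V V es d" using ej(2,3) unfolding Hd_V_def by auto
  have "inj_on (Hd_rep es) (e \<times> {j})"
    by (auto simp: inj_on_def Hd_rep_def split: if_splits)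
  then show "card f = 2" using ej(3) \<open>card e = 2\<close> by (simp add: card_image card_cartesian_product)
qed

lemma Hd_rep_copy_1: "Hd_rep es ` (A \<times> {1}) = A \<times> {1}"
proof -
  have "Hd_rep es ` (A \<times> {1}) = id ` (A \<times> {1})" by (rule image_cong) (auto simp: Hd_rep_def)
  then show ?thesis by simp
qed

lemma Hd_rep_glued_edge: "j \<ge> 2 \<Longrightarrow> Hd_rep es ` (es j \<times> {j}) = es j \<times> {j - 1}"
proof -
  assume "j \<ge> 2"
  then have "Hd_rep es ` (es j \<times> {j}) = (\<lambda>(x, i). (x, i - 1)) ` (es j \<times> {j})"
    by (intro image_cong) (auto simp: Hd_rep_def)
  then show ?thesis by auto
qed

lemma Hd_rep_next_edge: "j \<ge> 1 \<Longrightarrow> Hd_rep es ` (es (Suc j) \<times> {j}) = es (Suc j) \<times> {j}"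
proof -
  assume "j \<ge> 1"
  then have "Hd_rep es ` (es (Suc j) \<times> {j}) = id ` (es (Suc j) \<times> {j})"
    using es_disjoint_Suc[of j] by (intro image_cong) (auto simp: Hd_rep_def)
  then show ?thesis by simp
qed

(* In copy j the edge e_j is deleted (j = 1) or glued onto the deleted e_j of copy j - 1,
   and e_(j+1) is deleted for j < d. *)
definition copy_edges :: "nat \<Rightarrow> ('a \<times> nat) set set" where
  "copy_edges j = (\<lambda>e. Hd_rep es ` (e \<times> {j})) ` (E - {es j} - (if j < d then {es (Suc j)} else {}))"

lemma Hd_E_subset_copy_edges: "Hd_E E es d \<subseteq> (\<Union>j\<in>{1..d}. copy_edges j)"
proof
  fix f assume f: "f \<in> Hd_E E es d"
  then obtain e j where ej: "e \<in> E" "j \<in> {1..d}" "f = Hd_rep es ` (e \<times> {j})"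
    by (auto simp: Hd_E_def)
  have removed: "f \<noteq> es 1 \<times> {1}" "\<And>i. i \<in> {1..d - 1} \<Longrightarrow> f \<noteq> es (Suc i) \<times> {i}"
    using f by (auto simp: Hd_E_def)
  have "e \<noteq> es j"
  proof
    assume e: "e = es j"
    show False
    proof (cases "j = 1")
      case True
      then show False using removed(1) ej(3) e Hd_rep_copy_1 by simp
    next
      case False
      then have "f = es (Suc (j - 1)) \<times> {j - 1}" "j - 1 \<in> {1..d - 1}"
        using ej e Hd_rep_glued_edge[of j] by auto
      then show False using removed(2) by blast
    qed
  qed
  moreover have "e \<noteq> es (Suc j)" if "j < d"
  proof -
    have "j \<in> {1..d - 1}" using ej(2) that by auto
    then show ?thesis using removed(2)[of j] ej Hd_rep_next_edge[of j] by auto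
  qed
  ultimately have "f \<in> copy_edges j" unfolding copy_edges_def using ej by auto
  then show "f \<in> (\<Union>j\<in>{1..d}. copy_edges j)" using ej(2) by blast
qed

lemma card_copy_edges_le:
  assumes "j \<in> {1..d}"
  shows "card (copy_edges j) \<le> (if j < d then card E - 2 else card E - 1)"
proof -
  have "card (copy_edges j) \<le> card (E - {es j} - (if j < d then {es (Suc j)} else {}))"
    unfolding copy_edges_def using finite_E by (intro card_image_le) auto
  also have "\<dots> = (if j < d then card E - 2 else card E - 1)"
    using assms es_in_E[of j] es_in_E[of "Suc j"] es_neq_Suc[of j] finite_E
    by (simp add: card_Diff_singleton_if numeral_2_eq_2)
  finally show ?thesis .
qed

lemma card_Hd_E_le: "card (Hd_E E es d) \<le> d * (card E - 2) + 1"
proof -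
  have "card (Hd_E E es d) \<le> card (\<Union>j\<in>{1..d}. copy_edges j)"
    using Hd_E_subset_copy_edges finite_E by (intro card_mono) (auto simp: copy_edges_def)
  also have "\<dots> \<le> (\<Sum>j\<in>{1..d}. card (copy_edges j))" by (rule card_UN_le) simp
  also have "\<dots> \<le> (\<Sum>j\<in>{1..d}. if j < d then card E - 2 else card E - 1)"
    by (intro sum_mono card_copy_edges_le)
  also have "{1..d} = insert d {1..<d}" using d_pos by auto
  also have "(\<Sum>j\<in>insert d {1..<d}. if j < d then card E - 2 else card E - 1)
      = (card E - 1) + (d - 1) * (card E - 2)" by simp
  also have "\<dots> = d * (card E - 2) + 1"
  proof -
    obtain c where "card E = 2 + c" using le_Suc_ex[OF card_E_ge_2] by blast
    with d_pos show ?thesis by (cases d) simp_all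
  qed
  finally show ?thesis by simp
qed

lemma expectation_X_d_ge:
  assumes uv: "u \<in> {1..n}" "v \<in> {1..n}" "u \<noteq> v" and q: "0 \<le> q" "q \<le> 1"
  shows "real ((n - 2) choose ((card V - 2) * d)) * q ^ (d * (card E - 2) + 1)
    \<le> measure_pmf.expectation (Gnp n q) (\<lambda>G. real (X_d V E es d n G u v))"
proof -
  let ?C = "rooted_copies (Hd_V V es d) (Hd_E E es d) (Hd_root es) n UNIV u v"
  note copies = finite_rooted_copies[OF Hd_E_edge] rooted_copy_in_Kn[OF Hd_E_edge]
  have "X_d V E es d n G u v = card {c \<in> ?C. snd c \<subseteq> G}" for G
    unfolding X_d_def by (subst rooted_copies_eq) (rule refl)
  then have "measure_pmf.expectation (Gnp n q) (\<lambda>G. real (X_d V E es d n G u v))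
      = real (card ?C) * q ^ card (Hd_E E es d)"
    using expectation_Gnp_card_contained[OF copies q] by simp
  moreover have "(n - 2) choose ((card V - 2) * d) \<le> card ?C"
    using card_rooted_copies_ge[OF Hd_E_edge finite_Hd_V Hd_root_subset card_Hd_root uv]
    by (simp add: card_Hd_V)
  moreover have "q ^ (d * (card E - 2) + 1) \<le> q ^ card (Hd_E E es d)"
    using card_Hd_E_le q by (intro power_decreasing) auto
  ultimately show ?thesis using q by (simp add: mult_mono)
qed

end

lemma choose_power_ge:
  fixes q w :: real and n a b d :: nat
  assumes q: "0 < q" "q \<le> 1" and a: "a \<ge> 1" and d: "d \<ge> 1" and w: "w \<ge> 1"
    and bound: "w * real (a + 2) * real d \<le> q powr (real b / real a) * real n"
  shows "q * w ^ (a * d) \<le> real ((n - 2) choose (a * d)) * q ^ (d * b + 1)"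
proof -
  define K where "K = a * d"
  define L where "L = q powr (real b / real a)"
  have L: "0 < L" "L \<le> 1" using q by (auto simp: L_def powr_le1)
  have "1 \<le> K" unfolding K_def using mult_le_mono[OF a d] by simp
  then have K: "real K \<ge> 1" by simp
  have "1 \<le> w * real d" using w d mult_mono[of 1 w 1 "real d"] by simp
  then have "w * real K + 2 \<le> L * real n"
    using bound by (simp add: K_def L_def algebra_simps)
  then have ratio: "w * real K \<le> (real n - 2) * L"
    using L by (simp add: algebra_simps)
  have K_le: "real K \<le> (real n - 2) * L"
    using ratio mult_right_mono[OF w, of "real K"] by simp
  have "real n - 2 > 0"
  proof (rule ccontr)
    assume "\<not> real n - 2 > 0"
    then have "(real n - 2) * L \<le> 0" using L by (simp add: mult_nonpos_nonneg)
    then show False using K_le K by simp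
  qed
  then have n2: "real (n - 2) = real n - 2" by (simp add: of_nat_diff)
  have "(real n - 2) * L \<le> real (n - 2)"
    using L \<open>real n - 2 > 0\<close> by (simp add: n2 mult_left_le_one_le)
  then have "K \<le> n - 2" using K_le by linarith
  then have choose: "(real (n - 2) / real K) ^ K \<le> real ((n - 2) choose K)"
    by (rule binomial_ge_n_over_k_pow_k)
  have "real b / real a * real K = real (d * b)" using a by (simp add: K_def)
  then have "L ^ K = q ^ (d * b)"
    using L q by (simp add: L_def powr_realpow[symmetric] powr_powr)
  have "w \<le> real (n - 2) * L / real K"
    using ratio K by (simp add: n2 pos_le_divide_eq mult.commute)
  then have "q * w ^ K \<le> q * (real (n - 2) * L / real K) ^ K"
    using w q by (intro mult_left_mono power_mono) (simp_all add: n2)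
  also have "\<dots> = (real (n - 2) / real K) ^ K * (q * L ^ K)"
    by (simp add: power_divide power_mult_distrib)
  also have "\<dots> \<le> real ((n - 2) choose K) * q ^ (d * b + 1)"
    using mult_right_mono[OF choose, of "q ^ (d * b + 1)"] q \<open>L ^ K = q ^ (d * b)\<close>
    by (simp add: mult.commute)
  finally show ?thesis by (simp add: K_def)
qed

lemma expectation_X_d_ge_linear:
  fixes V :: "'a set" and E :: "'a set set" and es :: "nat \<Rightarrow> 'a set"
    and d n u v :: nat and q w :: real
  assumes bal: "balanced V E" and es: "edge_seq E es"
    and q: "0 < q" "q \<le> 1" and uv: "u \<in> {1..n}" "v \<in> {1..n}" "u \<noteq> v" and n: "n \<ge> 2"
    and w: "w > 0" and bound: "w * real (card V) * real d \<le> q powr lambdaH V E * real n"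
    and growth: "real n \<le> w ^ ((card V - 2) * d)"
  shows "q * real n \<le> measure_pmf.expectation (Gnp n q) (\<lambda>G. real (X_d V E es d n G u v))"
proof -
  have simple: "simple_graph V E" and V: "card V \<ge> 4" using bal by (auto simp: balanced_def)
  have d: "d \<ge> 1" using growth n by (cases d) auto
  have "w \<ge> 1"
  proof (rule ccontr)
    assume "\<not> w \<ge> 1"
    then have "w ^ ((card V - 2) * d) \<le> 1" using w by (intro power_le_one) auto
    then show False using growth n by simp
  qed
  interpret Hd_construction V E es d using simple es d by unfold_locales
  have "lambdaH V E = real (card E - 2) / real (card V - 2)"
    using V card_E_ge_2 by (simp add: lambdaH_def of_nat_diff)
  moreover have "card V - 2 + 2 = card V" using V by simp
  ultimately have "q * w ^ ((card V - 2) * d)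
      \<le> real ((n - 2) choose ((card V - 2) * d)) * q ^ (d * (card E - 2) + 1)"
    using choose_power_ge[OF q _ d \<open>w \<ge> 1\<close>, of "card V - 2" "card E - 2" n] V bound by simp
  also have "\<dots> \<le> measure_pmf.expectation (Gnp n q) (\<lambda>G. real (X_d V E es d n G u v))"
    using q by (intro expectation_X_d_ge uv) simp_all
  finally show ?thesis using mult_left_mono[OF growth, of q] q by linarith
qed

theorem lemma2p4:
  fixes V :: "'a set" and E :: "'a set set" and es :: "nat \<Rightarrow> 'a set"
    and p :: "nat \<Rightarrow> real" and d :: "nat \<Rightarrow> nat" and \<omega> :: "nat \<Rightarrow> real"
    and u v :: "nat \<Rightarrow> nat"
  assumes "balanced V E"
    and "edge_seq E es"
    and "\<forall>n. 0 \<le> p n \<and> p n \<le> 1"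
    and "eventually (\<lambda>n. u n \<in> {1..n} \<and> v n \<in> {1..n} \<and> u n \<noteq> v n) sequentially"
    and "eventually (\<lambda>n. \<omega> n > 0 \<and>
            p n powr lambdaH V E * real n \<ge> \<omega> n * real (card V) * real (d n) \<and>
            \<omega> n ^ ((card V - 2) * d n) \<ge> real n) sequentially"
    and "filterlim (\<lambda>n. p n * real n) at_top sequentially"
  shows "filterlim (\<lambda>n. measure_pmf.expectation (Gnp n (p n))
            (\<lambda>G. real (X_d V E es (d n) n G (u n) (v n)))) at_top sequentially"
proof -
  have "eventually (\<lambda>n. 1 \<le> p n * real n) sequentially"
    using assms(6) by (simp add: filterlim_at_top)
  with assms(4,5) eventually_ge_at_top[of 2]
  have "eventually (\<lambda>n. p n * real n \<le> measure_pmf.expectation (Gnp n (p n))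
            (\<lambda>G. real (X_d V E es (d n) n G (u n) (v n)))) sequentially"
  proof eventually_elim
    case (elim n)
    then have "p n \<noteq> 0" by auto
    then have "0 < p n" using assms(3) by (simp add: order_less_le)
    with elim show ?case
      using expectation_X_d_ge_linear[OF assms(1,2)] assms(3) by blast
  qed
  then show ?thesis using assms(6) by (rule filterlim_at_top_mono[rotated])
qed

end
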